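(* Let $f\colon[n]\to\mathbb{R}$ and let $x<y<z$ be elements of $[n]$ such that $f$ is not convex on $\{x,y,z\}$, i.e. $\frac{f(y)-f(x)}{y-x}>\frac{f(z)-f(y)}{z-y}$. Then at least one of $x$, $y$, $z$ fails some triple test rooted at it whose height is at most $2\max\{y-x,\,z-y\}$.
   Context: $[n]=\{0,\dots,n-1\}$. For $a\in[n]$, a triple test rooted at $a$ is a (not necessarily sorted) triple $(a,b,c)$ such that $b\in\{2^k\lfloor\frac{a-1}{2^k}\rfloor,\ 2^k\lceil\frac{a+1}{2^k}\rceil\}$ for some integer $k$ with $1\le2^k<n$, and $c\in\{a+1,b+1\}$; the number $2^k$ is the height of the triple test, and $b$ is called a hub of $a$. The point $a$ fails the triple test if $f$ is not convex on $\{a,b,c\}$, where $f$ is convex on a set of three reals $u<v<w$ iff $\frac{f(v)-f(u)}{v-u}\le\frac{f(w)-f(v)}{w-v}$ (a set with fewer than three points is trivially convex). *)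

theory Defs
  imports Complex_Main
begin

text \<open>Points of [n] = {0,...,n-1} are represented as integers; f :: int => real
  is only ever evaluated at points of [n].\<close>

definition conv_on :: "(int \<Rightarrow> real) \<Rightarrow> int set \<Rightarrow> bool" where
  "conv_on f S \<longleftrightarrow> (\<forall>u\<in>S. \<forall>v\<in>S. \<forall>w\<in>S. u < v \<and> v < w \<longrightarrow>
      (f v - f u) / real_of_int (v - u) \<le> (f w - f v) / real_of_int (w - v))"

text \<open>(a,b,c) is a triple test rooted at a of height 2^k (all points in [n]).\<close>
definition triple_test :: "nat \<Rightarrow> int \<Rightarrow> nat \<Rightarrow> int \<Rightarrow> int \<Rightarrow> bool" where
  "triple_test n a k b c \<longleftrightarrow>
     a \<in> {0..<int n} \<and> b \<in> {0..<int n} \<and> c \<in> {0..<int n} \<and>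
     1 \<le> (2::nat)^k \<and> (2::nat)^k < n \<and>
     (b = 2^k * \<lfloor>real_of_int (a - 1) / 2^k\<rfloor> \<or> b = 2^k * \<lceil>real_of_int (a + 1) / 2^k\<rceil>) \<and>
     (c = a + 1 \<or> c = b + 1)"

definition fails_test :: "(int \<Rightarrow> real) \<Rightarrow> nat \<Rightarrow> int \<Rightarrow> nat \<Rightarrow> int \<Rightarrow> int \<Rightarrow> bool" where
  "fails_test f n a k b c \<longleftrightarrow> triple_test n a k b c \<and> \<not> conv_on f {a, b, c}"

end

theory Submission imports Defs begin

text \<open>Suppose every test rooted at \<open>x\<close>, \<open>y\<close> or \<open>z\<close> of height at most
  \<open>h = 2 max (y - x) (z - y)\<close> passes. For \<open>u + 2 \<le> v\<close> there is a multiple \<open>p\<close> of a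
  power \<open>2^k \<le> 2 (v - u - 1)\<close> strictly between \<open>u\<close> and \<open>v\<close> that is at the same time
  the right hub of \<open>u\<close> and the left hub of \<open>v\<close>. The tests \<open>(u, p, p + 1)\<close>,
  \<open>(v, p, p + 1)\<close>, \<open>(v, p, v + 1)\<close> give
  \<open>slope u p \<le> slope p (p + 1) \<le> slope p v \<le> slope v (v + 1)\<close>, and as \<open>slope u v\<close>
  is a weighted average of \<open>slope u p\<close> and \<open>slope p v\<close>, \<open>slope u v \<le> slope v (v + 1)\<close>.
  Symmetrically the tests \<open>(u, p, u + 1)\<close>, \<open>(u, p, p + 1)\<close>, \<open>(v, p, p + 1)\<close> give
  \<open>slope u (u + 1) \<le> slope u v\<close>. For \<open>(u, v) = (x, y)\<close> and \<open>(y, z)\<close> this yields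
  \<open>slope x y \<le> slope y (y + 1) \<le> slope y z\<close>, contradicting non-convexity. (When
  \<open>v = u + 1\<close>, the single test \<open>(v, u, v + 1)\<close> of height 1 does the job.)\<close>

definition slope :: "(int \<Rightarrow> real) \<Rightarrow> int \<Rightarrow> int \<Rightarrow> real" where
  "slope f a b = (f b - f a) / real_of_int (b - a)"

lemma conv_on_triple:
  assumes "a < b" "b < c"
  shows "conv_on f {a, b, c} \<longleftrightarrow> slope f a b \<le> slope f b c"
  using assms unfolding conv_on_def slope_def by auto

lemma mediant_le_iff:
  fixes p q A B :: real
  assumes "p > 0" "q > 0"
  shows "A / p \<le> B / q \<longleftrightarrow> A / p \<le> (A + B) / (p + q)"
    and "A / p \<le> B / q \<longleftrightarrow> (A + B) / (p + q) \<le> B / q"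
  using assms by (simp_all add: field_simps)

lemma slope_le_slope_iff:
  assumes "a < b" "b < c"
  shows slope_le_slope_iff_le_chord:
      "slope f a b \<le> slope f b c \<longleftrightarrow> slope f a b \<le> slope f a c"
    and slope_le_slope_iff_chord_le:
      "slope f a b \<le> slope f b c \<longleftrightarrow> slope f a c \<le> slope f b c"
proof -
  have "slope f a c =
      ((f b - f a) + (f c - f b)) / (real_of_int (b - a) + real_of_int (c - b))"
    unfolding slope_def by simp
  then show "slope f a b \<le> slope f b c \<longleftrightarrow> slope f a b \<le> slope f a c"
    and "slope f a b \<le> slope f b c \<longleftrightarrow> slope f a c \<le> slope f b c"
    using mediant_le_iff[of "real_of_int (b - a)" "real_of_int (c - b)" "f b - f a" "f c - f b"]
      assms
    unfolding slope_def by simp_all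
qed

definition left_hub :: "nat \<Rightarrow> int \<Rightarrow> int" where
  "left_hub k a = 2^k * \<lfloor>real_of_int (a - 1) / 2^k\<rfloor>"

definition right_hub :: "nat \<Rightarrow> int \<Rightarrow> int" where
  "right_hub k a = 2^k * \<lceil>real_of_int (a + 1) / 2^k\<rceil>"

lemma triple_test_iff:
  "triple_test n a k b c \<longleftrightarrow>
     a \<in> {0..<int n} \<and> b \<in> {0..<int n} \<and> c \<in> {0..<int n} \<and> 2^k < n \<and>
     (b = left_hub k a \<or> b = right_hub k a) \<and> (c = a + 1 \<or> c = b + 1)"
  unfolding triple_test_def left_hub_def right_hub_def by auto

lemma left_hub_eqI:
  assumes "2^k * j < a" "a \<le> 2^k * (j + 1)"
  shows "left_hub k a = 2^k * j"
proof -
  have "real_of_int (2^k * j) \<le> real_of_int (a - 1)"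
    "real_of_int (a - 1) < real_of_int (2^k * (j + 1))"
    using assms by linarith+
  then have "\<lfloor>real_of_int (a - 1) / 2^k\<rfloor> = j"
    unfolding floor_eq_iff by (simp add: field_simps)
  then show ?thesis unfolding left_hub_def by simp
qed

lemma right_hub_eqI:
  assumes "2^k * (j - 1) \<le> a" "a < 2^k * j"
  shows "right_hub k a = 2^k * j"
proof -
  have "real_of_int (2^k * (j - 1)) < real_of_int (a + 1)"
    "real_of_int (a + 1) \<le> real_of_int (2^k * j)"
    using assms by linarith+
  then have "\<lceil>real_of_int (a + 1) / 2^k\<rceil> = j"
    unfolding ceiling_eq_iff by (simp add: field_simps)
  then show ?thesis unfolding right_hub_def by simp
qed

lemma isolated_multiple_between:
  fixes d u v :: int
  assumes "0 < d" "d < v - u" "v - u \<le> 2 * d"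
  obtains D j where "D = d \<or> D = 2 * d"
    "D * (j - 1) \<le> u" "u < D * j" "D * j < v" "v \<le> D * (j + 1)"
proof -
  note multiple_simps = right_diff_distrib distrib_left mult_1_right
  define i where "i = u div d + 1"
  have "d * i = u - u mod d + d"
    unfolding i_def by (simp add: minus_mod_eq_mult_div algebra_simps)
  moreover have "0 \<le> u mod d" "u mod d < d"
    using \<open>0 < d\<close> by simp_all
  ultimately have i: "u < d * i" "d * i \<le> u + d"
    by linarith+
  show thesis
  proof (cases "v \<le> d * i + d")
    case True
    then show thesis
      using i assms by (intro that[of d i, unfolded multiple_simps]) auto
  next
    case False
    \<comment> \<open>\<open>d * i\<close> and \<open>d * (i + 1)\<close> both lie in \<open>{u<..<v}\<close>; the one with even
      multiplier is a multiple of \<open>2 * d\<close> whose neighbours lie outside\<close>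
    define m where "m = (i + 1) div 2"
    have "2 * m = i \<or> 2 * m = i + 1" unfolding m_def by presburger
    then have "2 * d * m = d * i \<or> 2 * d * m = d * i + d"
      by (auto simp: algebra_simps)
    then show thesis
      using i False assms by (intro that[of "2 * d" m, unfolded multiple_simps]) auto
  qed
qed

lemma common_hub_between:
  fixes u v :: int
  assumes "0 \<le> u" "u + 2 \<le> v"
  obtains p k where "u < p" "p < v" "right_hub k u = p" "left_hub k v = p"
    "2^k \<le> p" "2^k \<le> 2 * (v - u - 1)"
proof -
  have "1 \<le> nat (v - u - 1)" using assms by simp
  then obtain l where l: "2^l \<le> nat (v - u - 1)" "nat (v - u - 1) < 2^(l + 1)"
    using ex_power_ivl1[of 2 "nat (v - u - 1)"] by blast
  then have l_int: "(2::int)^l \<le> v - u - 1" "v - u - 1 < 2 * 2^l"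
    using assms by (simp_all add: le_nat_iff nat_less_iff)
  then have "0 < (2::int)^l" "(2::int)^l < v - u" "v - u \<le> 2 * 2^l"
    by simp_all
  then obtain D j where D: "D = 2^l \<or> D = 2 * 2^l"
    "D * (j - 1) \<le> u" "u < D * j" "D * j < v" "v \<le> D * (j + 1)"
    by (rule isolated_multiple_between)
  have D_le: "D \<le> 2 * (v - u - 1)"
    using D(1) l_int by auto
  obtain k where k: "D = 2^k"
    using D(1) by (auto intro: that[of l] that[of "Suc l"])
  have "0 < D * j" using D(3) \<open>0 \<le> u\<close> by linarith
  then have "0 < j" using k by (simp add: zero_less_mult_iff)
  then have "D \<le> D * j" using k by simp
  then show thesis
    using that[of "D * j" k] D D_le k right_hub_eqI[of k j u] left_hub_eqI[of k j v]
    by simp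
qed

lemma slope_succ_le_slope:
  assumes "p < v" "conv_on f {p, p + 1, v}"
  shows "slope f p (p + 1) \<le> slope f p v"
proof (cases "p + 1 = v")
  case False
  then have "slope f p (p + 1) \<le> slope f (p + 1) v"
    using assms conv_on_triple[of p "p + 1" v] by simp
  then show ?thesis
    using False assms slope_le_slope_iff_le_chord[of p "p + 1" v] by simp
qed simp

lemma slope_le_slope_succ_of_hub:
  assumes "u < p" "p < v"
    and "conv_on f {u, p, p + 1}" "conv_on f {p, p + 1, v}" "conv_on f {p, v, v + 1}"
  shows "slope f u v \<le> slope f v (v + 1)"
proof -
  have "slope f u p \<le> slope f p (p + 1)"
    using assms conv_on_triple[of u p "p + 1"] by simp
  also have "\<dots> \<le> slope f p v"
    using assms by (intro slope_succ_le_slope)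
  finally have "slope f u v \<le> slope f p v"
    using assms slope_le_slope_iff_chord_le[of u p v] by simp
  also have "\<dots> \<le> slope f v (v + 1)"
    using assms conv_on_triple[of p v "v + 1"] by simp
  finally show ?thesis .
qed

lemma slope_succ_le_slope_of_hub:
  assumes "u < q" "q < v"
    and "conv_on f {u, u + 1, q}" "conv_on f {u, q, q + 1}" "conv_on f {q, q + 1, v}"
  shows "slope f u (u + 1) \<le> slope f u v"
proof -
  have "slope f u (u + 1) \<le> slope f u q"
    using assms by (intro slope_succ_le_slope)
  also have "slope f u q \<le> slope f u v"
  proof -
    have "slope f u q \<le> slope f q (q + 1)"
      using assms conv_on_triple[of u q "q + 1"] by simp
    also have "\<dots> \<le> slope f q v"
      using assms by (intro slope_succ_le_slope)
    finally show ?thesis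
      using assms slope_le_slope_iff_le_chord[of u q v] by simp
  qed
  finally show ?thesis .
qed

definition passes_tests_up_to :: "(int \<Rightarrow> real) \<Rightarrow> nat \<Rightarrow> int \<Rightarrow> int \<Rightarrow> bool" where
  "passes_tests_up_to f n h a \<longleftrightarrow>
     (\<forall>k b c. triple_test n a k b c \<and> (2::int)^k \<le> h \<longrightarrow> conv_on f {a, b, c})"

lemma passes_tests_up_toD:
  "passes_tests_up_to f n h a \<Longrightarrow> triple_test n a k b c \<Longrightarrow> 2^k \<le> h \<Longrightarrow>
    conv_on f {a, b, c}"
  unfolding passes_tests_up_to_def by blast

lemma common_hub_tests:
  assumes "0 \<le> u" "u + 2 \<le> v" "v < int n"
  obtains p k where "u < p" "p < v" "2^k \<le> 2 * (v - u - 1)"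
    "triple_test n u k p (u + 1)" "triple_test n u k p (p + 1)" "triple_test n v k p (p + 1)"
    "v + 1 < int n \<Longrightarrow> triple_test n v k p (v + 1)"
proof -
  from assms(1,2) obtain p k where p: "u < p" "p < v" "right_hub k u = p" "left_hub k v = p"
    "2^k \<le> p" "2^k \<le> 2 * (v - u - 1)"
    by (rule common_hub_between)
  have "int (2^k) < int n"
    using p assms by (simp only: of_nat_power of_nat_numeral)
  then show thesis
    using p assms by (intro that[of p k]) (auto simp: triple_test_iff)
qed

lemma slope_le_slope_succ_if_passes:
  assumes "0 \<le> u" "u < v" "v + 1 < int n" "2 * (v - u) \<le> h"
    and "passes_tests_up_to f n h u" "passes_tests_up_to f n h v"
  shows "slope f u v \<le> slope f v (v + 1)"
proof (cases "v = u + 1")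
  case True
  then have "triple_test n v 0 u (v + 1)"
    using assms by (simp add: triple_test_iff left_hub_def)
  then have "conv_on f {v, u, v + 1}"
    using assms(4,6) True by (intro passes_tests_up_toD) auto
  then have "conv_on f {u, v, v + 1}"
    by (simp add: insert_commute)
  then show ?thesis
    using True conv_on_triple[of u v "v + 1"] by simp
next
  case False
  then have "u + 2 \<le> v" "v < int n" using assms by linarith+
  with assms(1) obtain p k where p: "u < p" "p < v" "2^k \<le> 2 * (v - u - 1)"
    and tests: "triple_test n u k p (u + 1)" "triple_test n u k p (p + 1)"
      "triple_test n v k p (p + 1)" "v + 1 < int n \<Longrightarrow> triple_test n v k p (v + 1)"
    by (rule common_hub_tests) blast
  have "2^k \<le> h" using p(3) assms(4) by simp
  with tests(2-4) assms(3)
  have "conv_on f {u, p, p + 1}" "conv_on f {v, p, p + 1}" "conv_on f {v, p, v + 1}"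
    using assms(5,6) passes_tests_up_toD by blast+
  then have "conv_on f {u, p, p + 1}" "conv_on f {p, p + 1, v}" "conv_on f {p, v, v + 1}"
    by (simp_all add: insert_commute)
  then show ?thesis
    using p by (intro slope_le_slope_succ_of_hub)
qed

lemma slope_succ_le_slope_if_passes:
  assumes "0 \<le> u" "u < v" "v < int n" "2 * (v - u) \<le> h"
    and "passes_tests_up_to f n h u" "passes_tests_up_to f n h v"
  shows "slope f u (u + 1) \<le> slope f u v"
proof (cases "v = u + 1")
  case False
  then have "u + 2 \<le> v" using assms by linarith
  with assms(1) obtain q k where q: "u < q" "q < v" "2^k \<le> 2 * (v - u - 1)"
    and tests: "triple_test n u k q (u + 1)" "triple_test n u k q (q + 1)"
      "triple_test n v k q (q + 1)" "v + 1 < int n \<Longrightarrow> triple_test n v k q (v + 1)"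
    using assms(3) by (rule common_hub_tests) blast
  have "2^k \<le> h" using q(3) assms(4) by simp
  with tests(1-3)
  have "conv_on f {u, q, u + 1}" "conv_on f {u, q, q + 1}" "conv_on f {v, q, q + 1}"
    using assms(5,6) passes_tests_up_toD by blast+
  then have "conv_on f {u, u + 1, q}" "conv_on f {u, q, q + 1}" "conv_on f {q, q + 1, v}"
    by (simp_all add: insert_commute)
  then show ?thesis
    using q by (intro slope_succ_le_slope_of_hub)
qed simp

theorem lemma3p3:
  fixes f :: "int \<Rightarrow> real" and n :: nat and x y z :: int
  assumes "x \<in> {0..<int n}" "y \<in> {0..<int n}" "z \<in> {0..<int n}"
    and "x < y" "y < z"
    and "(f y - f x) / real_of_int (y - x) > (f z - f y) / real_of_int (z - y)"
  shows "\<exists>a\<in>{x, y, z}. \<exists>k b c. fails_test f n a k b c \<and>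
           int (2 ^ k) \<le> 2 * max (y - x) (z - y)"
proof (rule ccontr)
  let ?h = "2 * max (y - x) (z - y)"
  assume "\<not> ?thesis"
  then have passes: "passes_tests_up_to f n ?h a" if "a \<in> {x, y, z}" for a
    using that unfolding passes_tests_up_to_def fails_test_def by fastforce
  have "slope f x y \<le> slope f y (y + 1)"
    using assms passes
    by (intro slope_le_slope_succ_if_passes[where n = n and h = ?h]) (auto simp: max_def)
  also have "\<dots> \<le> slope f y z"
    using assms passes
    by (intro slope_succ_le_slope_if_passes[where n = n and h = ?h]) (auto simp: max_def)
  finally show False
    using assms(6) unfolding slope_def by simp
qed

end
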